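(* Assume (F), fix $\alpha\in\,]0,1[$, and let $0\le u^+<u^-\le V$ with $\hat\rho_{u^-}>\check\rho_{u^+}$. Then $\check\rho_{u^-}<\check\rho_{u^+}<\hat\rho_{u^-}<\hat\rho_{u^+}$ and $$u^--u^+\ \ge\ \frac{\beta}{2}\,\big(\check\rho_{u^+}-\check\rho_{u^-}\big).$$
   Context: Hypothesis (F): $R>0$; $f\in C^2([0,R];[0,+\infty))$ with $f(\rho)=\rho v(\rho)$, $v\in C^2([0,R];[0,+\infty))$; $f(0)=f(R)=0$; there are $B\ge\beta>0$ with $-B\le f''\le-\beta$ on $[0,R]$; $v'(\rho)<0$ for $\rho\in\,]0,R[$. Let $V:=\max_{[0,R]}v=v(0)$. Define $f_\alpha(\rho):=\alpha f(\rho/\alpha)$ for $\rho\in[0,\alpha R]$. For $u\in[0,V]$: $\tilde\rho_u$ is the unique solution of $f_\alpha'(\rho)=u$; $\varphi_u(\rho):=f_\alpha(\tilde\rho_u)+u(\rho-\tilde\rho_u)$ for $\rho\in[0,R]$; $\mathcal I_u:=\{\rho\in[0,R]: f(\rho)=\varphi_u(\rho)\}$, $\check\rho_u:=\min\mathcal I_u$, $\hat\rho_u:=\max\mathcal I_u$. *)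

theory Defs
  imports "HOL-Analysis.Analysis"
begin

definition f_alpha :: "real \<Rightarrow> (real \<Rightarrow> real) \<Rightarrow> real \<Rightarrow> real" where
  "f_alpha \<alpha> f \<rho> = \<alpha> * f (\<rho> / \<alpha>)"

text \<open>rho_tilde_u: the unique solution in [0, alpha R] of f_alpha'(rho) = u
  (one-sided derivative at the endpoints, i.e. derivative within [0, alpha R]).\<close>
definition rho_tilde :: "(real \<Rightarrow> real) \<Rightarrow> real \<Rightarrow> real \<Rightarrow> real \<Rightarrow> real" where
  "rho_tilde f \<alpha> R u =
     (THE \<rho>. \<rho> \<in> {0..\<alpha> * R} \<and>
        (f_alpha \<alpha> f has_real_derivative u) (at \<rho> within {0..\<alpha> * R}))"

definition phi_u :: "(real \<Rightarrow> real) \<Rightarrow> real \<Rightarrow> real \<Rightarrow> real \<Rightarrow> real \<Rightarrow> real" where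
  "phi_u f \<alpha> R u \<rho> =
     f_alpha \<alpha> f (rho_tilde f \<alpha> R u) + u * (\<rho> - rho_tilde f \<alpha> R u)"

definition I_u :: "(real \<Rightarrow> real) \<Rightarrow> real \<Rightarrow> real \<Rightarrow> real \<Rightarrow> real set" where
  "I_u f \<alpha> R u = {\<rho> \<in> {0..R}. f \<rho> = phi_u f \<alpha> R u \<rho>}"

text \<open>min and max of the (closed, bounded) set I_u, written as Inf / Sup.\<close>
definition rho_check :: "(real \<Rightarrow> real) \<Rightarrow> real \<Rightarrow> real \<Rightarrow> real \<Rightarrow> real" where
  "rho_check f \<alpha> R u = Inf (I_u f \<alpha> R u)"

definition rho_hat :: "(real \<Rightarrow> real) \<Rightarrow> real \<Rightarrow> real \<Rightarrow> real \<Rightarrow> real" where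
  "rho_hat f \<alpha> R u = Sup (I_u f \<alpha> R u)"

end

theory Submission
  imports Defs
begin

(*
  For u = f' y, phi_u is the tangent to f_alpha at alpha y. By concavity and f 0 = 0 it lies
  below f at alpha y and above f at 0, so I_u is a nonempty compact set. For y1 < y2, with
  u^- = f' y1 and u^+ = f' y2, the two tangent lines cross at a point x strictly between alpha y1
  and alpha y2. Since f minus a line is strictly concave, it is positive strictly between two
  points where it is nonnegative; this places the least contact point c of u^+ left of x and the
  largest contact point b of u^- right of x, and the intermediate value theorem gives the
  remaining inequalities. Quantitatively, f - phi_{u^-} is at least beta/2 (c - a) (b - c) at c,
  a being the least contact point of u^-, whereas at c it equals
  phi_{u^+} - phi_{u^-} <= (u^- - u^+) (b - c).
*)

lemma real_derivative_unique_within_Icc: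
  fixes f :: "real \<Rightarrow> real"
  assumes "a < b" "x \<in> {a..b}"
    and "(f has_real_derivative D) (at x within {a..b})"
    and "(f has_real_derivative E) (at x within {a..b})"
  shows "D = E"
  using assms vector_derivative_unique_within_closed_interval[of a b x f D E]
  by (auto simp: has_real_derivative_iff_has_vector_derivative)

lemma deriv_at_0_of_times_id:
  fixes f v :: "real \<Rightarrow> real"
  assumes "0 < R"
    and f_deriv: "(f has_real_derivative D) (at 0 within {0..R})"
    and v_deriv: "(v has_real_derivative E) (at 0 within {0..R})"
    and f_eq: "\<forall>x\<in>{0..R}. f x = x * v x"
  shows "D = v 0"
proof -
  have "((\<lambda>x. x * v x) has_real_derivative v 0) (at 0 within {0..R})"
    using DERIV_mult[OF DERIV_ident v_deriv] by simp
  then have "(f has_real_derivative v 0) (at 0 within {0..R})"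
    by (rule has_field_derivative_transform_within[OF _ zero_less_one])
       (use \<open>0 < R\<close> f_eq in \<open>auto simp: dist_real_def\<close>)
  then show ?thesis
    using real_derivative_unique_within_Icc[OF \<open>0 < R\<close>, of 0 f D "v 0"] f_deriv \<open>0 < R\<close> by simp
qed

context
  fixes a b \<beta> :: real and f f' f'' :: "real \<Rightarrow> real"
  assumes f_deriv: "\<forall>x\<in>{a..b}. (f has_real_derivative f' x) (at x within {a..b})"
    and f'_deriv: "\<forall>x\<in>{a..b}. (f' has_real_derivative f'' x) (at x within {a..b})"
    and f''_le: "\<forall>x\<in>{a..b}. f'' x \<le> - \<beta>"
begin

lemma strongly_concave_deriv_decrease:
  assumes "a \<le> p" "p \<le> q" "q \<le> b"
  shows "\<beta> * (q - p) \<le> f' p - f' q"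
proof -
  have "continuous_on {a..b} f'"
    by (rule DERIV_continuous_on) (use f'_deriv in auto)
  then have cont: "continuous_on {p..q} (\<lambda>x. f' x + \<beta> * x)"
    by (intro continuous_intros) (rule continuous_on_subset, use assms in auto)
  have "f' q + \<beta> * q \<le> f' p + \<beta> * p"
  proof (rule DERIV_nonpos_imp_decreasing_open[OF \<open>p \<le> q\<close> _ cont])
    fix x assume x: "p < x" "x < q"
    then have "a < x" "x < b" using assms by auto
    with f'_deriv have "(f' has_real_derivative f'' x) (at x within {a..b})" by simp
    then have "(f' has_real_derivative f'' x) (at x)"
      using at_within_Icc_at[OF \<open>a < x\<close> \<open>x < b\<close>] by simp
    then have "((\<lambda>x. f' x + \<beta> * x) has_real_derivative f'' x + \<beta>) (at x)"
      by (auto intro!: derivative_eq_intros)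
    moreover have "f'' x \<le> - \<beta>"
      using f''_le \<open>a < x\<close> \<open>x < b\<close> by simp
    then have "f'' x + \<beta> \<le> 0" by simp
    ultimately show "\<exists>y. ((\<lambda>x. f' x + \<beta> * x) has_real_derivative y) (at x) \<and> y \<le> 0"
      by blast
  qed
  then show ?thesis by (simp add: algebra_simps)
qed

lemma strongly_concave_tangent_le:
  assumes "p \<in> {a..b}" "q \<in> {a..b}"
  shows "f q \<le> f p + f' p * (q - p) - \<beta> / 2 * (q - p)\<^sup>2"
proof -
  define h where "h s = f p + f' p * (s - p) - \<beta> / 2 * (s - p)\<^sup>2 - f s" for s
  have f_cont: "continuous_on {a..b} f"
    by (rule DERIV_continuous_on) (use f_deriv in auto)
  have h_cont: "continuous_on {s..t} h" if "a \<le> s" "t \<le> b" for s t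
    unfolding h_def by (intro continuous_intros continuous_on_subset[OF f_cont]) (use that in auto)
  have h_deriv: "(h has_real_derivative (f' p - f' s) - \<beta> * (s - p)) (at s)" if "a < s" "s < b" for s
  proof -
    have "(f has_real_derivative f' s) (at s within {a..b})"
      using f_deriv that by simp
    then have "(f has_real_derivative f' s) (at s)"
      using at_within_Icc_at[OF that] by simp
    then show ?thesis
      unfolding h_def by (auto intro!: derivative_eq_intros simp: power2_eq_square algebra_simps)
  qed
  have "h p \<le> h q"
  proof (cases "p \<le> q")
    case True
    show ?thesis
    proof (rule DERIV_nonneg_imp_increasing_open[OF True _ h_cont])
      fix x assume "p < x" "x < q"
      then have "\<beta> * (x - p) \<le> f' p - f' x" and "a < x" "x < b"
        using strongly_concave_deriv_decrease[of p x] assms by auto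
      then show "\<exists>y. (h has_real_derivative y) (at x) \<and> 0 \<le> y"
        using h_deriv[of x] by (intro exI[of _ "(f' p - f' x) - \<beta> * (x - p)"]) auto
    qed (use assms in auto)
  next
    case False
    show ?thesis
    proof (rule DERIV_nonpos_imp_decreasing_open[of q p, OF _ _ h_cont])
      fix x assume "q < x" "x < p"
      then have "\<beta> * (p - x) \<le> f' x - f' p" and "a < x" "x < b"
        using strongly_concave_deriv_decrease[of x p] assms by auto
      then show "\<exists>y. (h has_real_derivative y) (at x) \<and> y \<le> 0"
        using h_deriv[of x] by (intro exI[of _ "(f' p - f' x) - \<beta> * (x - p)"]) (auto simp: algebra_simps)
    qed (use assms False in auto)
  qed
  then show ?thesis unfolding h_def by simp
qed

lemma strongly_concave_three_point:
  assumes "a \<le> p" "p \<le> m" "m \<le> q" "q \<le> b"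
  shows "(q - m) * f p + (m - p) * f q + \<beta> / 2 * (m - p) * (q - m) * (q - p) \<le> (q - p) * f m"
proof -
  have "(q - m) * f p \<le> (q - m) * (f m + f' m * (p - m) - \<beta> / 2 * (p - m)\<^sup>2)"
    by (rule mult_left_mono[OF strongly_concave_tangent_le]) (use assms in auto)
  moreover have "(m - p) * f q \<le> (m - p) * (f m + f' m * (q - m) - \<beta> / 2 * (q - m)\<^sup>2)"
    by (rule mult_left_mono[OF strongly_concave_tangent_le]) (use assms in auto)
  moreover have "(q - m) * (f m + f' m * (p - m) - \<beta> / 2 * (p - m)\<^sup>2)
      + (m - p) * (f m + f' m * (q - m) - \<beta> / 2 * (q - m)\<^sup>2)
      = (q - p) * f m - \<beta> / 2 * (m - p) * (q - m) * (q - p)"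
    by (simp add: field_simps power2_eq_square)
  ultimately show ?thesis by linarith
qed

end

locale rescaled_flux =
  fixes R \<beta> \<alpha> :: real and f f' f'' :: "real \<Rightarrow> real"
  assumes R_pos: "0 < R" and beta_pos: "0 < \<beta>"
    and alpha_pos: "0 < \<alpha>" and alpha_less_1: "\<alpha> < 1"
    and f_deriv: "\<forall>x\<in>{0..R}. (f has_real_derivative f' x) (at x within {0..R})"
    and f'_deriv: "\<forall>x\<in>{0..R}. (f' has_real_derivative f'' x) (at x within {0..R})"
    and f''_le: "\<forall>x\<in>{0..R}. f'' x \<le> - \<beta>"
    and f_0: "f 0 = 0" and f_R: "f R = 0"
begin

lemmas deriv_decrease = strongly_concave_deriv_decrease[OF f_deriv f'_deriv f''_le]
lemmas tangent_le = strongly_concave_tangent_le[OF f_deriv f'_deriv f''_le]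
lemmas three_point = strongly_concave_three_point[OF f_deriv f'_deriv f''_le]

lemma continuous_on_f: "continuous_on {0..R} f"
  by (rule DERIV_continuous_on) (use f_deriv in auto)

lemma alpha_times_mem: "y \<in> {0..R} \<Longrightarrow> \<alpha> * y \<in> {0..R}"
  using alpha_pos alpha_less_1 mult_left_le_one_le[of y \<alpha>] by auto

lemma f'_strict_antimono:
  assumes "0 \<le> p" "p < q" "q \<le> R"
  shows "f' q < f' p"
proof -
  have "0 < \<beta> * (q - p)"
    using assms beta_pos by simp
  then show ?thesis
    using deriv_decrease[of p q] assms by linarith
qed

lemma inj_on_f': "inj_on f' {0..R}"
proof (rule inj_onI)
  fix p q assume "p \<in> {0..R}" "q \<in> {0..R}" "f' p = f' q"
  then show "p = q"
    using f'_strict_antimono[of p q] f'_strict_antimono[of q p]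
    by (cases p q rule: linorder_cases) auto
qed

lemma f'_R_neg: "f' R < 0"
proof -
  have "f 0 \<le> f R + f' R * (0 - R) - \<beta> / 2 * (0 - R)\<^sup>2"
    by (rule tangent_le) (use R_pos in auto)
  then have "f' R * R \<le> - \<beta> / 2 * R\<^sup>2"
    using f_0 f_R by (simp add: algebra_simps)
  moreover have "0 < \<beta> / 2 * R\<^sup>2"
    using beta_pos R_pos by simp
  ultimately have "f' R * R < 0" by linarith
  then show ?thesis
    using R_pos by (simp add: mult_less_0_iff)
qed

lemma f'_attains:
  assumes "0 \<le> u" "u \<le> f' 0"
  obtains y where "y \<in> {0..R}" "f' y = u"
proof -
  have "continuous_on {0..R} f'"
    by (rule DERIV_continuous_on) (use f'_deriv in auto)
  then have "\<exists>y. 0 \<le> y \<and> y \<le> R \<and> f' y = u"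
    by (intro IVT2') (use assms f'_R_neg R_pos in auto)
  then show ?thesis using that by auto
qed

lemma f_alpha_deriv:
  assumes "y \<in> {0..R}"
  shows "(f_alpha \<alpha> f has_real_derivative f' y) (at (\<alpha> * y) within {0..\<alpha> * R})"
proof -
  have image: "(\<lambda>r. r / \<alpha>) ` {0..\<alpha> * R} = {0..R}"
  proof
    show "(\<lambda>r. r / \<alpha>) ` {0..\<alpha> * R} \<subseteq> {0..R}"
      using alpha_pos by (auto simp: field_simps)
    show "{0..R} \<subseteq> (\<lambda>r. r / \<alpha>) ` {0..\<alpha> * R}"
    proof
      fix x assume "x \<in> {0..R}"
      then have "\<alpha> * x \<in> {0..\<alpha> * R}" "x = (\<alpha> * x) / \<alpha>"
        using alpha_pos by auto
      then show "x \<in> (\<lambda>r. r / \<alpha>) ` {0..\<alpha> * R}" by blast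
    qed
  qed
  have "((\<lambda>r. r / \<alpha>) has_real_derivative 1 / \<alpha>) (at (\<alpha> * y) within {0..\<alpha> * R})"
    using alpha_pos by (auto intro!: derivative_eq_intros)
  moreover have "(f has_real_derivative f' y)
      (at ((\<lambda>r. r / \<alpha>) (\<alpha> * y)) within (\<lambda>r. r / \<alpha>) ` {0..\<alpha> * R})"
    using f_deriv assms alpha_pos image by simp
  ultimately have "((\<lambda>r. \<alpha> * (f \<circ> (\<lambda>r. r / \<alpha>)) r) has_real_derivative \<alpha> * (f' y * (1 / \<alpha>)))
      (at (\<alpha> * y) within {0..\<alpha> * R})"
    by (intro DERIV_cmult DERIV_image_chain)
  moreover have "(\<lambda>r. \<alpha> * (f \<circ> (\<lambda>r. r / \<alpha>)) r) = f_alpha \<alpha> f"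
    by (auto simp: f_alpha_def)
  ultimately show ?thesis
    using alpha_pos by simp
qed

lemma rho_tilde_eq:
  assumes "y \<in> {0..R}"
  shows "rho_tilde f \<alpha> R (f' y) = \<alpha> * y"
  unfolding rho_tilde_def
proof (rule the_equality)
  show "\<alpha> * y \<in> {0..\<alpha> * R} \<and> (f_alpha \<alpha> f has_real_derivative f' y) (at (\<alpha> * y) within {0..\<alpha> * R})"
    using f_alpha_deriv assms alpha_pos by (auto intro: mult_left_mono)
next
  fix r
  assume r: "r \<in> {0..\<alpha> * R} \<and> (f_alpha \<alpha> f has_real_derivative f' y) (at r within {0..\<alpha> * R})"
  define z where "z = r / \<alpha>"
  have r_eq: "r = \<alpha> * z" and z: "z \<in> {0..R}"
    using r alpha_pos by (auto simp: z_def field_simps)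
  have "f' z = f' y"
    using real_derivative_unique_within_Icc[of 0 "\<alpha> * R" r "f_alpha \<alpha> f" "f' z" "f' y"]
      f_alpha_deriv[OF z] r r_eq alpha_pos R_pos by simp
  then show "r = \<alpha> * y"
    using inj_on_f' z assms r_eq by (auto dest: inj_onD)
qed

text \<open>The tangent to f_alpha at alpha y, i.e. phi_u for u = f' y, as a function on [0, R].\<close>
definition tangent :: "real \<Rightarrow> real \<Rightarrow> real" where
  "tangent y r = \<alpha> * f y + f' y * (r - \<alpha> * y)"

definition contact_set :: "real \<Rightarrow> real set" where
  "contact_set y = {r \<in> {0..R}. f r = tangent y r}"

lemma I_u_eq: "y \<in> {0..R} \<Longrightarrow> I_u f \<alpha> R (f' y) = contact_set y"
  using rho_tilde_eq alpha_pos
  by (simp add: I_u_def contact_set_def tangent_def phi_u_def f_alpha_def)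

lemma rho_check_eq: "y \<in> {0..R} \<Longrightarrow> rho_check f \<alpha> R (f' y) = Inf (contact_set y)"
  by (simp add: rho_check_def I_u_eq)

lemma rho_hat_eq: "y \<in> {0..R} \<Longrightarrow> rho_hat f \<alpha> R (f' y) = Sup (contact_set y)"
  by (simp add: rho_hat_def I_u_eq)

lemma tangent_affine: "tangent y r = tangent y 0 + f' y * r"
  by (simp add: tangent_def algebra_simps)

lemma tangent_nonneg_at_0:
  assumes "y \<in> {0..R}"
  shows "0 \<le> tangent y 0"
proof -
  have "f 0 \<le> f y + f' y * (0 - y) - \<beta> / 2 * (0 - y)\<^sup>2"
    by (rule tangent_le) (use assms R_pos in auto)
  moreover have "0 \<le> \<beta> / 2 * (0 - y)\<^sup>2"
    using beta_pos by simp
  ultimately have "0 \<le> f y - f' y * y"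
    using f_0 by simp
  then show ?thesis
    using alpha_pos by (simp add: tangent_def algebra_simps)
qed

lemma tangent_le_at_tangency:
  assumes "y \<in> {0..R}"
  shows "tangent y (\<alpha> * y) \<le> f (\<alpha> * y)"
proof -
  define Q where "Q = \<beta> / 2 * (\<alpha> * y - 0) * (y - \<alpha> * y) * (y - 0)"
  have "(y - \<alpha> * y) * f 0 + (\<alpha> * y - 0) * f y + Q \<le> (y - 0) * f (\<alpha> * y)"
    unfolding Q_def by (rule three_point)
       (use assms alpha_times_mem[OF assms] mult_left_le_one_le[of y \<alpha>] alpha_pos alpha_less_1 in auto)
  moreover have "0 \<le> Q"
    unfolding Q_def using assms alpha_pos alpha_less_1 beta_pos mult_left_le_one_le[of y \<alpha>]
    by (intro mult_nonneg_nonneg) auto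
  ultimately have "y * (\<alpha> * f y) \<le> y * f (\<alpha> * y)"
    using f_0 by (simp add: mult.assoc mult.left_commute)
  then have "\<alpha> * f y \<le> f (\<alpha> * y)"
    using assms f_0 alpha_pos by (cases "y = 0") auto
  then show ?thesis by (simp add: tangent_def)
qed

lemma continuous_on_tangent_gap:
  assumes "0 \<le> s" "t \<le> R"
  shows "continuous_on {s..t} (\<lambda>r. f r - tangent y r)"
  unfolding tangent_def
  by (intro continuous_intros continuous_on_subset[OF continuous_on_f]) (use assms in auto)

lemma contact_set_nonempty:
  assumes "y \<in> {0..R}"
  shows "contact_set y \<noteq> {}"
proof -
  have "\<exists>r. 0 \<le> r \<and> r \<le> \<alpha> * y \<and> f r - tangent y r = 0"
  proof (rule IVT')
    show "f 0 - tangent y 0 \<le> 0"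
      using tangent_nonneg_at_0[OF assms] f_0 by simp
    show "0 \<le> f (\<alpha> * y) - tangent y (\<alpha> * y)"
      using tangent_le_at_tangency[OF assms] by simp
  qed (use alpha_times_mem[OF assms] in \<open>auto intro: continuous_on_tangent_gap\<close>)
  then obtain r where "0 \<le> r" "r \<le> \<alpha> * y" "f r = tangent y r"
    by auto
  then have "r \<in> contact_set y"
    using alpha_times_mem[OF assms] by (simp add: contact_set_def)
  then show ?thesis by auto
qed

lemma closed_contact_set: "closed (contact_set y)"
proof -
  have "closed {r \<in> {0..R}. f r - tangent y r = 0}"
    using continuous_closed_preimage_constant[OF continuous_on_tangent_gap[of 0 R y], of 0] by simp
  then show ?thesis
    by (simp add: contact_set_def)
qed

lemma bdd_below_contact_set: "bdd_below (contact_set y)"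
  unfolding contact_set_def by (rule bdd_belowI[of _ 0]) auto

lemma bdd_above_contact_set: "bdd_above (contact_set y)"
  unfolding contact_set_def by (rule bdd_aboveI[of _ R]) auto

lemma Inf_contact_set_mem: "y \<in> {0..R} \<Longrightarrow> Inf (contact_set y) \<in> contact_set y"
  by (rule closed_contains_Inf[OF contact_set_nonempty bdd_below_contact_set closed_contact_set])

lemma Sup_contact_set_mem: "y \<in> {0..R} \<Longrightarrow> Sup (contact_set y) \<in> contact_set y"
  by (rule closed_contains_Sup[OF contact_set_nonempty bdd_above_contact_set closed_contact_set])

lemma tangent_gap_three_point:
  assumes "0 \<le> p" "p \<le> m" "m \<le> q" "q \<le> R"
  shows "(q - m) * (f p - tangent y p) + (m - p) * (f q - tangent y q)
           + \<beta> / 2 * (m - p) * (q - m) * (q - p)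
         \<le> (q - p) * (f m - tangent y m)"
proof -
  have "(q - p) * tangent y m = (q - m) * tangent y p + (m - p) * tangent y q"
    by (simp add: tangent_def algebra_simps)
  then show ?thesis
    using three_point[OF assms] by (simp add: algebra_simps)
qed

lemma tangent_gap_pos_between:
  assumes "0 \<le> p" "p < m" "m < q" "q \<le> R"
    and "tangent y p \<le> f p" "tangent y q \<le> f q"
  shows "tangent y m < f m"
proof -
  have "0 < \<beta> / 2 * (m - p) * (q - m) * (q - p)"
    using assms beta_pos by simp
  moreover have "0 \<le> (q - m) * (f p - tangent y p) + (m - p) * (f q - tangent y q)"
    using assms by simp
  ultimately have "0 < (q - p) * (f m - tangent y m)"
    using tangent_gap_three_point[of p m q y] assms by linarith
  then show ?thesis
    using assms by (simp add: zero_less_mult_iff)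
qed

lemma Inf_contact_set_less:
  assumes y: "y \<in> {0..R}" and r: "r \<in> {0..R}" and gap: "tangent y r < f r"
  shows "Inf (contact_set y) < r"
proof -
  have "\<exists>z. 0 \<le> z \<and> z \<le> r \<and> f z - tangent y z = 0"
    by (rule IVT'[OF _ _ _ continuous_on_tangent_gap])
       (use tangent_nonneg_at_0[OF y] f_0 gap r in auto)
  then obtain z where z: "z \<in> contact_set y" "z \<le> r"
    using r by (auto simp: contact_set_def)
  then have "z < r"
    using gap by (auto simp: contact_set_def order_le_less)
  with z show ?thesis
    using cInf_lower[OF _ bdd_below_contact_set] by fastforce
qed

lemma Sup_contact_set_greater:
  assumes y: "y \<in> {0..R}" and slope: "0 \<le> f' y"
    and r: "r \<in> {0..R}" and gap: "tangent y r < f r"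
  shows "r < Sup (contact_set y)"
proof -
  have "0 \<le> tangent y R"
    using tangent_nonneg_at_0[OF y] slope R_pos tangent_affine[of y R] by simp
  then have "\<exists>z. r \<le> z \<and> z \<le> R \<and> f z - tangent y z = 0"
    by (intro IVT2'[OF _ _ _ continuous_on_tangent_gap]) (use f_R gap r in auto)
  then obtain z where z: "z \<in> contact_set y" "r \<le> z"
    using r by (auto simp: contact_set_def)
  then have "r < z"
    using gap by (auto simp: contact_set_def order_le_less)
  with z show ?thesis
    using cSup_upper[OF _ bdd_above_contact_set] by fastforce
qed

lemma tangent_less_at_other_tangency:
  assumes "y \<in> {0..R}" "z \<in> {0..R}" "y \<noteq> z"
  shows "tangent z (\<alpha> * z) < tangent y (\<alpha> * z)"
proof -
  have "f z \<le> f y + f' y * (z - y) - \<beta> / 2 * (z - y)\<^sup>2"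
    by (rule tangent_le) (use assms in auto)
  moreover have "0 < \<beta> / 2 * (z - y)\<^sup>2"
    using assms beta_pos by simp
  ultimately have "\<alpha> * f z < \<alpha> * (f y + f' y * (z - y))"
    using alpha_pos by simp
  then show ?thesis
    by (simp add: tangent_def algebra_simps)
qed

definition crossing :: "real \<Rightarrow> real \<Rightarrow> real" where
  "crossing y z = (tangent z 0 - tangent y 0) / (f' y - f' z)"

lemma tangent_diff_eq:
  assumes "f' y \<noteq> f' z"
  shows "tangent y r - tangent z r = (f' y - f' z) * (r - crossing y z)"
  using assms by (simp add: tangent_affine[of y r] tangent_affine[of z r] crossing_def field_simps)

context
  fixes y1 y2 :: real
  assumes y1_nonneg: "0 \<le> y1" and y1_less: "y1 < y2" and y2_le: "y2 \<le> R"
begin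

lemma y1_mem: "y1 \<in> {0..R}" and y2_mem: "y2 \<in> {0..R}"
  using y1_nonneg y1_less y2_le by auto

lemma slope_less: "f' y2 < f' y1"
  using f'_strict_antimono y1_nonneg y1_less y2_le by blast

lemma tangent_diff_crossing: "tangent y1 r - tangent y2 r = (f' y1 - f' y2) * (r - crossing y1 y2)"
  using tangent_diff_eq slope_less by simp

lemma tangent_less_tangent_iff: "tangent y1 r < tangent y2 r \<longleftrightarrow> r < crossing y1 y2"
proof -
  have "tangent y1 r < tangent y2 r \<longleftrightarrow> (f' y1 - f' y2) * (r - crossing y1 y2) < 0"
    using tangent_diff_crossing[of r] by linarith
  also have "\<dots> \<longleftrightarrow> r < crossing y1 y2"
    using slope_less by (simp add: mult_less_0_iff)
  finally show ?thesis .
qed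

lemma tangent_le_tangent_iff: "tangent y1 r \<le> tangent y2 r \<longleftrightarrow> r \<le> crossing y1 y2"
proof -
  have "tangent y1 r \<le> tangent y2 r \<longleftrightarrow> (f' y1 - f' y2) * (r - crossing y1 y2) \<le> 0"
    using tangent_diff_crossing[of r] by linarith
  also have "\<dots> \<longleftrightarrow> r \<le> crossing y1 y2"
    using slope_less by (simp add: mult_le_0_iff)
  finally show ?thesis .
qed

lemma crossing_between: "\<alpha> * y1 < crossing y1 y2" "crossing y1 y2 < \<alpha> * y2"
  using tangent_less_at_other_tangency[OF y2_mem y1_mem] tangent_less_at_other_tangency[OF y1_mem y2_mem]
    y1_less tangent_less_tangent_iff tangent_le_tangent_iff
  by (auto simp: not_le[symmetric])

context
  assumes overlap: "Inf (contact_set y2) < Sup (contact_set y1)"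
begin

lemma Inf_contact_lt_crossing: "Inf (contact_set y2) < crossing y1 y2"
proof (rule ccontr)
  let ?c = "Inf (contact_set y2)" and ?b = "Sup (contact_set y1)"
  assume "\<not> ?c < crossing y1 y2"
  then have "\<alpha> * y1 < ?c" "tangent y2 ?c \<le> tangent y1 ?c"
    using crossing_between(1) tangent_less_tangent_iff[of ?c] by auto
  moreover have "?c \<in> contact_set y2" "?b \<in> contact_set y1"
    using Inf_contact_set_mem[OF y2_mem] Sup_contact_set_mem[OF y1_mem] .
  ultimately have "tangent y1 ?c < f ?c" and "f ?c \<le> tangent y1 ?c"
    using tangent_gap_pos_between[of "\<alpha> * y1" ?c ?b y1] overlap
      tangent_le_at_tangency[OF y1_mem] alpha_times_mem[OF y1_mem]
    by (auto simp: contact_set_def)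
  then show False by simp
qed

lemma crossing_lt_Sup_contact: "crossing y1 y2 < Sup (contact_set y1)"
proof (rule ccontr)
  let ?c = "Inf (contact_set y2)" and ?b = "Sup (contact_set y1)"
  assume "\<not> crossing y1 y2 < ?b"
  then have "?b < \<alpha> * y2" "tangent y1 ?b \<le> tangent y2 ?b"
    using crossing_between(2) tangent_le_tangent_iff[of ?b] by auto
  moreover have "?c \<in> contact_set y2" "?b \<in> contact_set y1"
    using Inf_contact_set_mem[OF y2_mem] Sup_contact_set_mem[OF y1_mem] .
  ultimately have "tangent y2 ?b < f ?b" and "f ?b \<le> tangent y2 ?b"
    using tangent_gap_pos_between[of ?c ?b "\<alpha> * y2" y2] overlap
      tangent_le_at_tangency[OF y2_mem] alpha_times_mem[OF y2_mem]
    by (auto simp: contact_set_def)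
  then show False by simp
qed

lemma Inf_contact_set_less_Inf: "Inf (contact_set y1) < Inf (contact_set y2)"
proof (rule Inf_contact_set_less[OF y1_mem])
  show "Inf (contact_set y2) \<in> {0..R}"
    using Inf_contact_set_mem[OF y2_mem] by (simp add: contact_set_def)
  show "tangent y1 (Inf (contact_set y2)) < f (Inf (contact_set y2))"
    using Inf_contact_set_mem[OF y2_mem] Inf_contact_lt_crossing
      tangent_less_tangent_iff[of "Inf (contact_set y2)"]
    by (auto simp: contact_set_def)
qed

lemma Sup_contact_set_less_Sup:
  assumes "0 \<le> f' y2"
  shows "Sup (contact_set y1) < Sup (contact_set y2)"
proof (rule Sup_contact_set_greater[OF y2_mem assms])
  show "Sup (contact_set y1) \<in> {0..R}"
    using Sup_contact_set_mem[OF y1_mem] by (simp add: contact_set_def)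
  show "tangent y2 (Sup (contact_set y1)) < f (Sup (contact_set y1))"
    using Sup_contact_set_mem[OF y1_mem] crossing_lt_Sup_contact
      tangent_le_tangent_iff[of "Sup (contact_set y1)"]
    by (auto simp: contact_set_def not_le[symmetric])
qed

lemma slope_diff_ge:
  "\<beta> / 2 * (Inf (contact_set y2) - Inf (contact_set y1)) \<le> f' y1 - f' y2"
proof -
  define a b c where "a = Inf (contact_set y1)" and "b = Sup (contact_set y1)"
    and "c = Inf (contact_set y2)"
  have a: "a \<in> contact_set y1" and b: "b \<in> contact_set y1" and c: "c \<in> contact_set y2"
    using Inf_contact_set_mem[OF y1_mem] Sup_contact_set_mem[OF y1_mem]
      Inf_contact_set_mem[OF y2_mem] by (simp_all add: a_def b_def c_def)
  have ac: "a < c" and cb: "c < b"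
    using Inf_contact_set_less_Inf overlap by (simp_all add: a_def b_def c_def)
  have "(b - a) * (\<beta> / 2 * (c - a) * (b - c)) \<le> (b - a) * (f c - tangent y1 c)"
    using tangent_gap_three_point[of a c b y1] a b ac cb by (simp add: contact_set_def mult_ac)
  then have "\<beta> / 2 * (c - a) * (b - c) \<le> f c - tangent y1 c"
    using ac cb by simp
  also have "f c - tangent y1 c = (f' y1 - f' y2) * (crossing y1 y2 - c)"
    using c tangent_diff_crossing[of c] by (simp add: contact_set_def algebra_simps)
  also have "\<dots> \<le> (f' y1 - f' y2) * (b - c)"
    using crossing_lt_Sup_contact slope_less by (simp add: b_def)
  finally show ?thesis
    using cb by (simp add: a_def c_def mult.commute mult.left_commute)
qed

end

end

end

theorem mainTheorem6:
  fixes R B \<beta> \<alpha> up um :: real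
    and f f' f'' v v' v'' :: "real \<Rightarrow> real"
  assumes R_pos: "R > 0"
    and f_deriv: "\<forall>x\<in>{0..R}. (f has_real_derivative f' x) (at x within {0..R})"
    and f'_deriv: "\<forall>x\<in>{0..R}. (f' has_real_derivative f'' x) (at x within {0..R})"
    and f''_cont: "continuous_on {0..R} f''"
    and f_nonneg: "\<forall>x\<in>{0..R}. f x \<ge> 0"
    and f_eq: "\<forall>x\<in>{0..R}. f x = x * v x"
    and v_deriv: "\<forall>x\<in>{0..R}. (v has_real_derivative v' x) (at x within {0..R})"
    and v'_deriv: "\<forall>x\<in>{0..R}. (v' has_real_derivative v'' x) (at x within {0..R})"
    and v''_cont: "continuous_on {0..R} v''"
    and v_nonneg: "\<forall>x\<in>{0..R}. v x \<ge> 0"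
    and f0: "f 0 = 0" and fR: "f R = 0"
    and B_beta: "B \<ge> \<beta>" "\<beta> > 0"
    and f''_bounds: "\<forall>x\<in>{0..R}. - B \<le> f'' x \<and> f'' x \<le> - \<beta>"
    and v'_neg: "\<forall>x\<in>{0<..<R}. v' x < 0"
    and alpha: "0 < \<alpha>" "\<alpha> < 1"
    and u_bounds: "0 \<le> up" "up < um" "um \<le> v 0"
    and hyp: "rho_hat f \<alpha> R um > rho_check f \<alpha> R up"
  shows "rho_check f \<alpha> R um < rho_check f \<alpha> R up
         \<and> rho_check f \<alpha> R up < rho_hat f \<alpha> R um
         \<and> rho_hat f \<alpha> R um < rho_hat f \<alpha> R up
         \<and> um - up \<ge> \<beta> / 2 * (rho_check f \<alpha> R up - rho_check f \<alpha> R um)"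
proof -
  interpret rescaled_flux R \<beta> \<alpha> f f' f''
    using R_pos B_beta(2) alpha f_deriv f'_deriv f''_bounds f0 fR by unfold_locales auto
  have "f' 0 = v 0"
    by (rule deriv_at_0_of_times_id[OF R_pos _ _ f_eq]) (use f_deriv v_deriv R_pos in auto)
  then obtain y1 y2 where y1: "y1 \<in> {0..R}" "f' y1 = um" and y2: "y2 \<in> {0..R}" "f' y2 = up"
    using f'_attains u_bounds by (metis order.trans order_less_imp_le)
  have "y1 < y2"
    using f'_strict_antimono[of y2 y1] y1 y2 u_bounds by (cases y1 y2 rule: linorder_cases) auto
  with y1 y2 have y12: "0 \<le> y1" "y1 < y2" "y2 \<le> R"
    by auto
  have rho:
    "rho_check f \<alpha> R um = Inf (contact_set y1)" "rho_hat f \<alpha> R um = Sup (contact_set y1)"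
    "rho_check f \<alpha> R up = Inf (contact_set y2)" "rho_hat f \<alpha> R up = Sup (contact_set y2)"
    using rho_check_eq rho_hat_eq y1 y2 by auto
  with hyp have overlap: "Inf (contact_set y2) < Sup (contact_set y1)"
    by simp
  show ?thesis
    using Inf_contact_set_less_Inf[OF y12 overlap] Sup_contact_set_less_Sup[OF y12 overlap]
      slope_diff_ge[OF y12 overlap] overlap rho y1(2) y2(2) u_bounds(1)
    by simp
qed

end
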